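(* For $n,m\in\mathbb{N}_0$, $$\int_0^\pi x^n\sin^{2m}(x)\,dx=\frac{\pi^n}{4^m}\Bigg(\frac{\pi\binom{2m}{m}}{n+1}-n!\sum_{j=1}^{\lfloor n/2\rfloor}\frac{(-1)^j}{(2\pi)^{2j-1}(n+1-2j)!}\sum_{k=1}^{\infty}\frac{(-1)^k}{k^{2j}}\binom{2m}{m+k}\Bigg).$$
   Context: $\binom{2m}{m+k}=0$ for integers $k>m$. An empty sum is $0$. *)

theory Defs
  imports "HOL-Analysis.Analysis"
begin

end

theory Submission
  imports Defs
begin

text \<open>
  Expanding (e^(ix) - e^(-ix))^(2m) binomially and pairing the indices m - k and m + k gives
  4^m sin^(2m) x = C(2m,m) + 2 sum_{k=1..m} (-1)^k C(2m,m+k) cos(2kx). For a = 2k, integrating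
  x^n cos(ax) over [0, pi] by parts twice leads from n to n + 2, and only the boundary term at
  pi survives; the solution of this recurrence is a finite sum over j. Exchanging the sums over
  j and k gives the formula, whose series over k is finite because C(2m,m+k) = 0 for k > m.
\<close>

lemma has_integral_power:
  assumes "0 \<le> b"
  shows "((\<lambda>x::real. x ^ n) has_integral b ^ Suc n / Suc n) {0..b}"
proof -
  have "((\<lambda>x. x ^ Suc n / Suc n) has_real_derivative x ^ n) (at x)" for x :: real
    using DERIV_cdivide[OF DERIV_pow[of "Suc n" x], of "real (Suc n)"] by simp
  then have "((\<lambda>x::real. x ^ n) has_integral b ^ Suc n / Suc n - 0 ^ Suc n / Suc n) {0..b}"
    using assms by (intro fundamental_theorem_of_calculus)
      (auto simp: has_real_derivative_iff_has_vector_derivative intro: has_vector_derivative_at_within)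
  then show ?thesis by simp
qed

lemma has_integral_power_mult_by_parts:
  fixes f f' :: "real \<Rightarrow> real"
  assumes "0 \<le> b"
    and deriv: "\<And>x. (f has_real_derivative f' x) (at x)"
    and int: "((\<lambda>x. x ^ n * f x) has_integral I) {0..b}"
  shows "((\<lambda>x. x ^ Suc n * f' x) has_integral b ^ Suc n * f b - (n + 1) * I) {0..b}"
proof -
  have "((\<lambda>x. f' x * x ^ Suc n) has_integral b ^ Suc n * f b - (n + 1) * I) {0..b}"
  proof (rule integration_by_parts[OF bounded_bilinear_mult \<open>0 \<le> b\<close>])
    show "continuous_on {0..b} f"
      using deriv by (meson DERIV_isCont continuous_at_imp_continuous_on)
    show "(f has_vector_derivative f' x) (at x)" for x
      using deriv by (simp add: has_real_derivative_iff_has_vector_derivative)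
    show "((\<lambda>x. x ^ Suc n) has_vector_derivative (n + 1) * x ^ n) (at x)" for x :: real
      using DERIV_pow[of "Suc n" x] by (simp add: has_real_derivative_iff_has_vector_derivative add.commute)
    show "((\<lambda>x. f x * ((n + 1) * x ^ n)) has_integral
        f b * b ^ Suc n - f 0 * 0 ^ Suc n - (b ^ Suc n * f b - (n + 1) * I)) {0..b}"
      using has_integral_mult_left[OF int, of "real n + 1"] by (simp add: algebra_simps)
  qed (intro continuous_intros)
  then show ?thesis by (simp add: mult.commute add.commute)
qed

lemma sum_atMost_double_centered:
  fixes g :: "nat \<Rightarrow> 'a :: comm_monoid_add"
  shows "(\<Sum>l\<le>2 * m. g l) = g m + (\<Sum>k = 1..m. g (m - k) + g (m + k))"
proof -
  have "{..2 * m} = {..<m} \<union> {m..2 * m}" by auto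
  then have "(\<Sum>l\<le>2 * m. g l) = (\<Sum>l<m. g l) + (\<Sum>l = m..2 * m. g l)"
    by (simp add: sum.union_disjoint ivl_disj_int)
  also have "(\<Sum>l = m..2 * m. g l) = g m + (\<Sum>l = Suc m..2 * m. g l)"
    by (rule sum.atLeast_Suc_atMost) simp
  also have "(\<Sum>l = Suc m..2 * m. g l) = (\<Sum>k = 1..m. g (m + k))"
    using sum.shift_bounds_cl_nat_ivl[of g 1 m m] by (simp add: mult_2 add.commute)
  also have "(\<Sum>l<m. g l) = (\<Sum>k = 1..m. g (m - k))"
    by (rule sum.reindex_bij_witness[where i="\<lambda>k. m - k" and j="\<lambda>l. m - l"]) auto
  finally show ?thesis
    by (simp add: sum.distrib algebra_simps)
qed

lemma infsum_mult_choose_add: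
  fixes f :: "nat \<Rightarrow> real"
  shows "(\<Sum>\<^sub>\<infinity>k\<in>{1..}. f k * real (n choose (m + k))) = (\<Sum>k = 1..n - m. f k * real (n choose (m + k)))"
proof -
  have "(\<Sum>\<^sub>\<infinity>k\<in>{1..}. f k * real (n choose (m + k))) = (\<Sum>\<^sub>\<infinity>k\<in>{1..n - m}. f k * real (n choose (m + k)))"
    by (rule infsum_cong_neutral) auto
  then show ?thesis by simp
qed

lemma neg_four_power_mult_sin_power_even:
  fixes x :: real
  shows "(-4) ^ m * sin x ^ (2 * m) =
    (\<Sum>l\<le>2 * m. (-1) ^ l * real (2 * m choose l) * cos ((2 * real l - 2 * real m) * x))"
proof -
  have "complex_of_real ((-4) ^ m * sin x ^ (2 * m)) = (cis x - cis (- x)) ^ (2 * m)"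
  proof -
    have "cis x - cis (- x) = 2 * \<i> * sin x"
      by (simp add: complex_eq_iff)
    then have "(cis x - cis (- x)) ^ 2 = -4 * complex_of_real (sin x) ^ 2"
      by (simp add: power_mult_distrib)
    then have "(cis x - cis (- x)) ^ (2 * m) = (-4 * complex_of_real (sin x) ^ 2) ^ m"
      by (simp only: power_mult)
    then show ?thesis
      by (simp only: power_mult_distrib power_mult) simp
  qed
  also have "\<dots> = (\<Sum>l\<le>2 * m. of_nat (2 * m choose l) * cis x ^ l * (- cis (- x)) ^ (2 * m - l))"
    using binomial_ring[of "cis x" "- cis (- x)"] by simp
  also have "\<dots> = (\<Sum>l\<le>2 * m. of_real ((-1) ^ l * real (2 * m choose l)) * cis ((2 * real l - 2 * real m) * x))"
  proof (rule sum.cong[OF refl])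
    fix l assume "l \<in> {..2 * m}"
    then have "(-1 :: complex) ^ (2 * m - l) = (-1) ^ l"
      by (auto simp: minus_one_power_iff)
    moreover have "cis x ^ l * cis (- x) ^ (2 * m - l) = cis ((2 * real l - 2 * real m) * x)"
    proof -
      have "real l * x + real (2 * m - l) * (- x) = (2 * real l - 2 * real m) * x"
        using \<open>l \<in> {..2 * m}\<close> by (simp add: of_nat_diff algebra_simps)
      then show ?thesis
        by (simp only: Complex.DeMoivre cis_mult)
    qed
    ultimately show "of_nat (2 * m choose l) * cis x ^ l * (- cis (- x)) ^ (2 * m - l) =
        of_real ((-1) ^ l * real (2 * m choose l)) * cis ((2 * real l - 2 * real m) * x)"
      by (simp add: power_minus[of "cis (- x)"] algebra_simps)
  qed
  finally have "Re (complex_of_real ((-4) ^ m * sin x ^ (2 * m))) =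
      Re (\<Sum>l\<le>2 * m. of_real ((-1) ^ l * real (2 * m choose l)) * cis ((2 * real l - 2 * real m) * x))"
    by (rule arg_cong)
  then show ?thesis
    by (simp add: Re_sum)
qed

lemma four_power_mult_sin_power_even:
  fixes x :: real
  shows "4 ^ m * sin x ^ (2 * m) =
    real (2 * m choose m) + 2 * (\<Sum>k = 1..m. (-1) ^ k * real (2 * m choose (m + k)) * cos (2 * real k * x))"
proof -
  define g where "g l = (-1) ^ l * real (2 * m choose l) * cos ((2 * real l - 2 * real m) * x)" for l
  have pair: "g (m - k) + g (m + k) = (-1) ^ m * (2 * ((-1) ^ k * real (2 * m choose (m + k)) * cos (2 * real k * x)))"
    if "k \<in> {1..m}" for k
  proof -
    have "2 * m choose (m - k) = 2 * m choose (m + k)"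
      using that binomial_symmetric[of "m - k" "2 * m"] by simp
    moreover have "(-1 :: real) ^ (m - k) = (-1) ^ m * (-1) ^ k"
      using that by (simp add: minus_one_power_iff even_diff_nat)
    moreover have "cos ((2 * real (m - k) - 2 * real m) * x) = cos (2 * real k * x)"
    proof -
      have "(2 * real (m - k) - 2 * real m) * x = - (2 * real k * x)"
        using that by (simp add: of_nat_diff algebra_simps)
      then show ?thesis by simp
    qed
    ultimately show ?thesis
      by (simp add: g_def power_add algebra_simps)
  qed
  have "(\<Sum>k = 1..m. g (m - k) + g (m + k)) =
      (-1) ^ m * (2 * (\<Sum>k = 1..m. (-1) ^ k * real (2 * m choose (m + k)) * cos (2 * real k * x)))"
    by (subst sum.cong[OF refl pair]) (simp_all add: sum_distrib_left)
  moreover have "g m = (-1) ^ m * real (2 * m choose m)"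
    by (simp add: g_def)
  ultimately have "(-4) ^ m * sin x ^ (2 * m) = (-1) ^ m *
      (real (2 * m choose m) + 2 * (\<Sum>k = 1..m. (-1) ^ k * real (2 * m choose (m + k)) * cos (2 * real k * x)))"
    unfolding neg_four_power_mult_sin_power_even g_def [symmetric] sum_atMost_double_centered
    by (simp add: algebra_simps)
  then have "(-1) ^ m * ((-4) ^ m * sin x ^ (2 * m)) = ((-1) ^ m * (-1) ^ m) *
      (real (2 * m choose m) + 2 * (\<Sum>k = 1..m. (-1) ^ k * real (2 * m choose (m + k)) * cos (2 * real k * x)))"
    by simp
  then show ?thesis
    by (simp add: mult.assoc[symmetric] flip: power_mult_distrib)
qed

definition cos_moment_term :: "real \<Rightarrow> nat \<Rightarrow> nat \<Rightarrow> real" where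
  "cos_moment_term a n j = (-1) ^ j * fact n / fact (n + 1 - 2 * j) * pi ^ (n + 1 - 2 * j) / a ^ (2 * j)"

lemma cos_moment_term_1:
  "cos_moment_term a (n + 2) 1 = - ((real n + 2) * pi ^ (n + 1) / a ^ 2)"
  unfolding cos_moment_term_def by simp (simp add: minus_divide_left algebra_simps)

lemma cos_moment_term_Suc:
  "cos_moment_term a (n + 2) (Suc j) = - ((real n + 2) * (real n + 1) / a ^ 2 * cos_moment_term a n j)"
proof -
  have "n + 2 + 1 - 2 * Suc j = n + 1 - 2 * j" by simp
  then show ?thesis
    by (simp add: cos_moment_term_def field_simps power2_eq_square)
      (simp add: minus_divide_left algebra_simps)
qed

lemma sum_cos_moment_term_add_2:
  "(\<Sum>j = 1..(n + 2) div 2. cos_moment_term a (n + 2) j) =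
    - ((real n + 2) / a ^ 2 * (pi ^ (n + 1) + (real n + 1) * (\<Sum>j = 1..n div 2. cos_moment_term a n j)))"
proof -
  have "(n + 2) div 2 = Suc (n div 2)" by simp
  then have "(\<Sum>j = 1..(n + 2) div 2. cos_moment_term a (n + 2) j) =
      cos_moment_term a (n + 2) 1 + (\<Sum>j = Suc 1..Suc (n div 2). cos_moment_term a (n + 2) j)"
    by (simp only: sum.atLeast_Suc_atMost[of 1] le_add1 plus_1_eq_Suc)
  also have "(\<Sum>j = Suc 1..Suc (n div 2). cos_moment_term a (n + 2) j) =
      (\<Sum>j = 1..n div 2. cos_moment_term a (n + 2) (Suc j))"
    by (rule sum.shift_bounds_cl_Suc_ivl)
  also have "\<dots> = - ((real n + 2) * (real n + 1) / a ^ 2 * (\<Sum>j = 1..n div 2. cos_moment_term a n j))"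
    unfolding cos_moment_term_Suc by (simp only: sum_negf sum_distrib_left)
  also have "cos_moment_term a (n + 2) 1 + \<dots> =
      - ((real n + 2) / a ^ 2 * (pi ^ (n + 1) + (real n + 1) * (\<Sum>j = 1..n div 2. cos_moment_term a n j)))"
    unfolding cos_moment_term_1 by (simp add: add_divide_distrib algebra_simps)
  finally show ?thesis .
qed

lemma has_integral_power_mult_cos_add_2:
  assumes a: "a \<noteq> 0" and sin_a_pi: "sin (a * pi) = 0" and cos_a_pi: "cos (a * pi) = 1"
    and moment: "((\<lambda>x. x ^ n * cos (a * x)) has_integral C) {0..pi}"
  shows "((\<lambda>x. x ^ (n + 2) * cos (a * x)) has_integral
    (real n + 2) / a ^ 2 * (pi ^ (n + 1) - (real n + 1) * C)) {0..pi}"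
proof -
  have sin_deriv: "((\<lambda>x. - cos (a * x) / a) has_real_derivative sin (a * x)) (at x)" for x
    using a by (auto intro!: derivative_eq_intros)
  have cos_deriv: "((\<lambda>x. sin (a * x) / a) has_real_derivative cos (a * x)) (at x)" for x
    using a by (auto intro!: derivative_eq_intros)
  have "((\<lambda>x. x ^ n * (- cos (a * x) / a)) has_integral C / - a) {0..pi}"
    using has_integral_divide[OF moment, of "- a"] by simp
  from has_integral_power_mult_by_parts[OF _ sin_deriv this]
  have "((\<lambda>x. x ^ Suc n * sin (a * x)) has_integral
      pi ^ Suc n * (- cos (a * pi) / a) - (real n + 1) * (C / - a)) {0..pi}"
    by simp
  then have "((\<lambda>x. x ^ Suc n * sin (a * x)) has_integral ((real n + 1) * C - pi ^ Suc n) / a) {0..pi}"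
    by (rule has_integral_eq_rhs) (simp add: cos_a_pi diff_divide_distrib)
  from has_integral_divide[OF this, of a]
  have "((\<lambda>x. x ^ Suc n * (sin (a * x) / a)) has_integral ((real n + 1) * C - pi ^ Suc n) / a / a) {0..pi}"
    by simp
  from has_integral_power_mult_by_parts[OF _ cos_deriv this]
  have "((\<lambda>x. x ^ (n + 2) * cos (a * x)) has_integral
      pi ^ Suc (Suc n) * (sin (a * pi) / a) - (real (Suc n) + 1) * (((real n + 1) * C - pi ^ Suc n) / a / a)) {0..pi}"
    by simp
  then show ?thesis
    by (rule has_integral_eq_rhs) (use a sin_a_pi in \<open>simp add: power2_eq_square field_simps\<close>)
qed

lemma has_integral_power_mult_cos:
  assumes a: "a \<noteq> 0" and sin_a_pi: "sin (a * pi) = 0" and cos_a_pi: "cos (a * pi) = 1"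
  shows "((\<lambda>x. x ^ n * cos (a * x)) has_integral - (\<Sum>j = 1..n div 2. cos_moment_term a n j)) {0..pi}"
proof (induction n rule: nat_induct2)
  case 0
  have "((\<lambda>x. cos (a * x)) has_integral (sin (a * pi) / a - sin (a * 0) / a)) {0..pi}"
    using a by (intro fundamental_theorem_of_calculus)
      (auto intro!: derivative_eq_intros simp flip: has_real_derivative_iff_has_vector_derivative)
  then show ?case
    using sin_a_pi by simp
next
  case 1
  have "((\<lambda>x. sin (a * x) / a) has_integral ((- cos (a * pi) / a - (- cos (a * 0) / a)) / a)) {0..pi}"
    using a by (intro has_integral_divide fundamental_theorem_of_calculus)
      (auto intro!: derivative_eq_intros simp flip: has_real_derivative_iff_has_vector_derivative)
  then have "((\<lambda>x. x ^ 0 * (sin (a * x) / a)) has_integral 0) {0..pi}"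
    using cos_a_pi by simp
  moreover have "((\<lambda>x. sin (a * x) / a) has_real_derivative cos (a * x)) (at x)" for x
    using a by (auto intro!: derivative_eq_intros)
  ultimately show ?case
    using has_integral_power_mult_by_parts[of pi "\<lambda>x. sin (a * x) / a" "\<lambda>x. cos (a * x)" 0 0]
      sin_a_pi by simp
next
  case (step n)
  from has_integral_power_mult_cos_add_2[OF assms step]
  show ?case
    unfolding sum_cos_moment_term_add_2 by (simp add: algebra_simps)
qed

lemma two_mult_cos_moment_term_even:
  assumes "1 \<le> j" "2 * j \<le> n"
  shows "2 * cos_moment_term (2 * real k) n j =
    pi ^ n * fact n * ((-1) ^ j / ((2 * pi) ^ (2 * j - 1) * fact (n + 1 - 2 * j))) / real k ^ (2 * j)"
proof -
  obtain i where i: "j = Suc i" using assms by (cases j) auto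
  have "n = (n + 1 - 2 * j) + (2 * i + 1)"
    using assms i by simp
  then have "pi ^ n = pi ^ (n + 1 - 2 * j) * pi ^ (2 * i + 1)"
    by (metis power_add)
  then show ?thesis
    unfolding cos_moment_term_def i by (simp add: field_simps power_mult_distrib)
qed

lemma sum_mult_sum_cos_moment_term_even:
  fixes b :: "nat \<Rightarrow> real"
  shows "2 * (\<Sum>k = 1..m. b k * (\<Sum>j = 1..n div 2. cos_moment_term (2 * real k) n j)) =
    pi ^ n * fact n * (\<Sum>j = 1..n div 2.
      (-1) ^ j / ((2 * pi) ^ (2 * j - 1) * fact (n + 1 - 2 * j)) * (\<Sum>k = 1..m. b k / real k ^ (2 * j)))"
proof -
  have "2 * (\<Sum>k = 1..m. b k * (\<Sum>j = 1..n div 2. cos_moment_term (2 * real k) n j)) =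
      (\<Sum>j = 1..n div 2. \<Sum>k = 1..m. b k * (2 * cos_moment_term (2 * real k) n j))"
    by (subst sum.swap) (simp add: sum_distrib_left mult.left_commute)
  also have "\<dots> = (\<Sum>j = 1..n div 2. \<Sum>k = 1..m. b k *
      (pi ^ n * fact n * ((-1) ^ j / ((2 * pi) ^ (2 * j - 1) * fact (n + 1 - 2 * j))) / real k ^ (2 * j)))"
  proof (intro sum.cong refl)
    fix j k assume "j \<in> {1..n div 2}"
    then have "1 \<le> j" "2 * j \<le> n" by auto
    then show "b k * (2 * cos_moment_term (2 * real k) n j) = b k *
        (pi ^ n * fact n * ((-1) ^ j / ((2 * pi) ^ (2 * j - 1) * fact (n + 1 - 2 * j))) / real k ^ (2 * j))"
      by (simp add: two_mult_cos_moment_term_even)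
  qed
  also have "\<dots> = pi ^ n * fact n * (\<Sum>j = 1..n div 2.
      (-1) ^ j / ((2 * pi) ^ (2 * j - 1) * fact (n + 1 - 2 * j)) * (\<Sum>k = 1..m. b k / real k ^ (2 * j)))"
    by (simp add: sum_distrib_left sum_divide_distrib mult_ac)
  finally show ?thesis .
qed

lemma has_integral_power_mult_sin_power_even:
  "((\<lambda>x. x ^ n * sin x ^ (2 * m)) has_integral
    (real (2 * m choose m) * (pi ^ Suc n / Suc n) -
     2 * (\<Sum>k = 1..m. (-1) ^ k * real (2 * m choose (m + k)) *
       (\<Sum>j = 1..n div 2. cos_moment_term (2 * real k) n j))) / 4 ^ m) {0..pi}"
proof -
  have "((\<lambda>x. (real (2 * m choose m) * x ^ n +
        2 * (\<Sum>k = 1..m. (-1) ^ k * real (2 * m choose (m + k)) * (x ^ n * cos (2 * real k * x)))) / 4 ^ m)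
      has_integral
      (real (2 * m choose m) * (pi ^ Suc n / Suc n) +
       2 * (\<Sum>k = 1..m. (-1) ^ k * real (2 * m choose (m + k)) *
         - (\<Sum>j = 1..n div 2. cos_moment_term (2 * real k) n j))) / 4 ^ m) {0..pi}"
    by (intro has_integral_divide has_integral_add has_integral_mult_right has_integral_sum
        has_integral_power has_integral_power_mult_cos) auto
  moreover have "(real (2 * m choose m) * x ^ n +
        2 * (\<Sum>k = 1..m. (-1) ^ k * real (2 * m choose (m + k)) * (x ^ n * cos (2 * real k * x)))) / 4 ^ m =
      x ^ n * sin x ^ (2 * m)" for x :: real
    using four_power_mult_sin_power_even[of m x]
    by (simp add: field_simps sum_distrib_left sum_distrib_right)
  ultimately show ?thesis
    by (simp add: sum_negf)
qed

theorem theorem1: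
  fixes n m :: nat
  shows "integral {0..pi} (\<lambda>x::real. x ^ n * sin x ^ (2 * m)) =
    pi ^ n / 4 ^ m *
      (pi * real ((2 * m) choose m) / real (n + 1)
       - fact n * (\<Sum>j = 1..n div 2.
           (-1) ^ j / ((2 * pi) ^ (2 * j - 1) * fact (n + 1 - 2 * j)) *
           (\<Sum>\<^sub>\<infinity>k\<in>{1::nat..}. (-1) ^ k / real k ^ (2 * j) * real ((2 * m) choose (m + k)))))"
proof -
  have series: "(\<Sum>\<^sub>\<infinity>k\<in>{1::nat..}. (-1) ^ k / real k ^ (2 * j) * real ((2 * m) choose (m + k))) =
      (\<Sum>k = 1..m. (-1) ^ k * real (2 * m choose (m + k)) / real k ^ (2 * j))" for j
    using infsum_mult_choose_add[of "\<lambda>k. (-1) ^ k / real k ^ (2 * j)" "2 * m" m] by simp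
  show ?thesis
    using has_integral_power_mult_sin_power_even[of n m]
    unfolding series sum_mult_sum_cos_moment_term_even
    by (simp add: integral_unique field_simps)
qed

end
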